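(* In the probabilistic Outcome Logic instance, let $C$ be a program, $\varphi$ an outcome assertion, $A$ a state assertion, and $p,q\in[0,1]$ with $q>1-p$. If there is an outcome assertion $\varphi'$ with $\varphi'\Rightarrow\varphi$, $\mathsf{sat}(\varphi')$ and $\vDash\langle\varphi'\rangle\,C\,\langle\mathbb{P}[\lnot A]\ge q\rangle$, then $\not\vDash\langle\varphi\rangle\,C\,\langle\mathbb{P}[A]\ge p\rangle$.
   Context: Subdistributions $\mu\colon\Sigma\to[0,1]$ with mass $|\mu|=\sum_\sigma\mu(\sigma)\le1$, support $\mathsf{supp}(\mu)$, zero $\varnothing$, and partial pointwise sum $+$ (defined when total mass $\le1$). Execution model: $\mathsf{bind}(\mu,k)=\sum_{x\in\mathsf{supp}(\mu)}\mu(x)\,k(x)$, $\mathsf{unit}(x)=\delta_x$, monoid $(+,\varnothing)$; a program $C$ has semantics $[\![C]\!]\colon\Sigma\to\mathcal{D}\Sigma$ and $[\![C]\!]^\dagger(\mu)=\mathsf{bind}(\mu,[\![C]\!])$. Atomic outcome assertions $\mathbb{P}[A]=p$ for state assertions $A$: $\mu\vDash\mathbb{P}[A]=p$ iff $|\mu|=p$ and all states in $\mathsf{supp}(\mu)$ satisfy $A$. Outcome assertions use $\top$ (always), $\bot$, $\top^\oplus$ (only $\varnothing$), classical $\land,\Rightarrow$, and $\oplus$: $\mu\vDash\varphi\oplus\psi$ iff $\mu=\mu_1+\mu_2$ with $\mu_1\vDash\varphi$, $\mu_2\vDash\psi$. $\mathbb{P}[A]\ge p$ abbreviates $(\mathbb{P}[A]=p)\oplus\top$.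 $\vDash\langle\varphi\rangle C\langle\psi\rangle$ iff $\mu\vDash\varphi$ implies $[\![C]\!]^\dagger(\mu)\vDash\psi$ for every $\mu$. $\varphi'\Rightarrow\varphi$ means every $\mu$ satisfying $\varphi'$ satisfies $\varphi$; $\mathsf{sat}(\varphi')$ means some $\mu$ satisfies $\varphi'$. *)

theory Defs
  imports "HOL-Analysis.Analysis"
begin

definition is_subdist :: "('s \<Rightarrow> real) \<Rightarrow> bool" where
  "is_subdist \<mu> \<longleftrightarrow> (\<forall>x. 0 \<le> \<mu> x) \<and> \<mu> summable_on UNIV \<and> infsum \<mu> UNIV \<le> 1"

definition mass :: "('s \<Rightarrow> real) \<Rightarrow> real" where
  "mass \<mu> = infsum \<mu> UNIV"

definition supp :: "('s \<Rightarrow> real) \<Rightarrow> 's set" where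
  "supp \<mu> = {x. \<mu> x \<noteq> 0}"

definition zero_dist :: "'s \<Rightarrow> real" where
  "zero_dist = (\<lambda>_. 0)"

definition bind_dist :: "('s \<Rightarrow> real) \<Rightarrow> ('s \<Rightarrow> 't \<Rightarrow> real) \<Rightarrow> ('t \<Rightarrow> real)" where
  "bind_dist \<mu> k = (\<lambda>y. infsum (\<lambda>x. \<mu> x * k x y) (supp \<mu>))"

definition is_kernel :: "('s \<Rightarrow> 's \<Rightarrow> real) \<Rightarrow> bool" where
  "is_kernel C \<longleftrightarrow> (\<forall>x. is_subdist (C x))"

definition lift_sem :: "('s \<Rightarrow> 's \<Rightarrow> real) \<Rightarrow> ('s \<Rightarrow> real) \<Rightarrow> ('s \<Rightarrow> real)" where
  "lift_sem C \<mu> = bind_dist \<mu> C"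

datatype 's oassn =
    OTop
  | OBot
  | OTopPlus
  | OAnd "'s oassn" "'s oassn"
  | OImp "'s oassn" "'s oassn"
  | OPlus "'s oassn" "'s oassn"
  | OProb "'s \<Rightarrow> bool" real

primrec models :: "('s \<Rightarrow> real) \<Rightarrow> 's oassn \<Rightarrow> bool" where
  "models \<mu> OTop = True"
| "models \<mu> OBot = False"
| "models \<mu> OTopPlus = (\<mu> = zero_dist)"
| "models \<mu> (OAnd \<phi> \<psi>) = (models \<mu> \<phi> \<and> models \<mu> \<psi>)"
| "models \<mu> (OImp \<phi> \<psi>) = (models \<mu> \<phi> \<longrightarrow> models \<mu> \<psi>)"
| "models \<mu> (OPlus \<phi> \<psi>) = (\<exists>\<mu>1 \<mu>2. is_subdist \<mu>1 \<and> is_subdist \<mu>2 \<and>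
        \<mu> = (\<lambda>x. \<mu>1 x + \<mu>2 x) \<and> models \<mu>1 \<phi> \<and> models \<mu>2 \<psi>)"
| "models \<mu> (OProb A p) = (mass \<mu> = p \<and> (\<forall>x\<in>supp \<mu>. A x))"

definition prob_ge :: "('s \<Rightarrow> bool) \<Rightarrow> real \<Rightarrow> 's oassn" where
  "prob_ge A p = OPlus (OProb A p) OTop"

definition valid_triple :: "'s oassn \<Rightarrow> ('s \<Rightarrow> 's \<Rightarrow> real) \<Rightarrow> 's oassn \<Rightarrow> bool" where
  "valid_triple \<phi> C \<psi> \<longleftrightarrow> (\<forall>\<mu>. is_subdist \<mu> \<longrightarrow> models \<mu> \<phi> \<longrightarrow> models (lift_sem C \<mu>) \<psi>)"

definition oimplies :: "'s oassn \<Rightarrow> 's oassn \<Rightarrow> bool" where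
  "oimplies \<phi>' \<phi> \<longleftrightarrow> (\<forall>\<mu>. is_subdist \<mu> \<longrightarrow> models \<mu> \<phi>' \<longrightarrow> models \<mu> \<phi>)"

definition osat :: "'s oassn \<Rightarrow> bool" where
  "osat \<phi> \<longleftrightarrow> (\<exists>\<mu>. is_subdist \<mu> \<and> models \<mu> \<phi>)"

end

theory Submission
  imports Defs
begin

text \<open>Suppose both \<open>P[A] \<ge> p\<close> and \<open>P[\<not>A] \<ge> q\<close> held of the output \<open>\<nu>\<close>
  of \<open>C\<close> on some \<open>\<mu>\<close> satisfying \<open>\<phi>'\<close> (hence \<open>\<phi>\<close>). Then \<open>\<nu>\<close> would contain a
  part of mass \<open>p\<close> supported in \<open>A\<close> and a part of mass \<open>q\<close> supported outside \<open>A\<close>.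
  Being disjointly supported, both fit into \<open>\<nu>\<close> at once, so \<open>p + q \<le> |\<nu>| \<le> 1\<close>,
  contradicting \<open>q > 1 - p\<close>. The only analytic input is that lifting a kernel of
  subdistributions preserves subdistributions.\<close>

lemma has_sum_sum:
  fixes g :: "'i \<Rightarrow> 'a \<Rightarrow> 'b::topological_comm_monoid_add"
  assumes "finite F" "\<And>i. i \<in> F \<Longrightarrow> (g i has_sum s i) S"
  shows "((\<lambda>x. \<Sum>i\<in>F. g i x) has_sum (\<Sum>i\<in>F. s i)) S"
  using assms by (induction F rule: finite_induct) (auto intro: has_sum_add)

lemma subdist_sum_le_one:
  assumes "is_subdist \<mu>" "finite F"
  shows "sum \<mu> F \<le> 1"
proof -
  have "sum \<mu> F \<le> infsum \<mu> UNIV"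
    using assms by (intro finite_sum_le_infsum) (auto simp: is_subdist_def)
  then show ?thesis
    using assms(1) by (simp add: is_subdist_def)
qed

lemma sum_lift_sem_le_mass:
  assumes C: "is_kernel C" and \<mu>: "is_subdist \<mu>" and F: "finite F"
  shows "sum (lift_sem C \<mu>) F \<le> mass \<mu>"
proof -
  have C_nonneg: "0 \<le> C x y" and C_le_one: "C x y \<le> 1" for x y
    using C subdist_sum_le_one[of "C x" "{y}"] by (auto simp: is_kernel_def is_subdist_def)
  have \<mu>_nonneg: "0 \<le> \<mu> x" for x
    using \<mu> by (simp add: is_subdist_def)
  have \<mu>_summable: "\<mu> summable_on supp \<mu>"
    using \<mu> summable_on_subset_banach by (auto simp: is_subdist_def)
  have summable: "(\<lambda>x. \<mu> x * C x y) summable_on supp \<mu>" for y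
    by (rule summable_on_comparison_test[OF \<mu>_summable])
       (auto simp: \<mu>_nonneg C_nonneg intro: mult_left_le[OF C_le_one])
  have "((\<lambda>x. \<Sum>y\<in>F. \<mu> x * C x y) has_sum sum (lift_sem C \<mu>) F) (supp \<mu>)"
    unfolding lift_sem_def bind_dist_def using F summable by (intro has_sum_sum) auto
  then have lifted_sum: "((\<lambda>x. \<mu> x * (\<Sum>y\<in>F. C x y)) has_sum sum (lift_sem C \<mu>) F) (supp \<mu>)"
    by (simp add: sum_distrib_left)
  then have "sum (lift_sem C \<mu>) F = infsum (\<lambda>x. \<mu> x * (\<Sum>y\<in>F. C x y)) (supp \<mu>)"
    by (simp add: has_sum_iff)
  also have "\<dots> \<le> infsum \<mu> (supp \<mu>)"
  proof (rule infsum_mono)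
    show "(\<lambda>x. \<mu> x * (\<Sum>y\<in>F. C x y)) summable_on supp \<mu>"
      using lifted_sum by (rule has_sum_imp_summable)
    show "\<mu> x * (\<Sum>y\<in>F. C x y) \<le> \<mu> x" for x
      using C F \<mu>_nonneg by (intro mult_left_le subdist_sum_le_one) (auto simp: is_kernel_def)
  qed (rule \<mu>_summable)
  also have "\<dots> \<le> mass \<mu>"
    using \<mu> \<mu>_summable \<mu>_nonneg unfolding mass_def is_subdist_def by (intro infsum_mono2) auto
  finally show ?thesis .
qed

lemma is_subdist_lift_sem:
  assumes "is_kernel C" "is_subdist \<mu>"
  shows "is_subdist (lift_sem C \<mu>)"
proof -
  have nonneg: "0 \<le> lift_sem C \<mu> y" for y
    using assms unfolding is_kernel_def is_subdist_def lift_sem_def bind_dist_def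
    by (auto intro: infsum_nonneg)
  have bounded: "sum (lift_sem C \<mu>) F \<le> 1" if "finite F" for F
    using sum_lift_sem_le_mass[OF assms that] assms(2) by (simp add: is_subdist_def mass_def)
  have "lift_sem C \<mu> summable_on UNIV"
    using nonneg bounded by (intro nonneg_bdd_above_summable_on bdd_aboveI) auto
  moreover have "infsum (lift_sem C \<mu>) UNIV \<le> 1"
    using calculation bounded by (intro infsum_le_finite_sums) auto
  ultimately show ?thesis
    using nonneg by (simp add: is_subdist_def)
qed

lemma models_prob_geE:
  assumes "models \<nu> (prob_ge A p)"
  obtains \<mu> where "is_subdist \<mu>" "mass \<mu> = p" "\<forall>x\<in>supp \<mu>. A x" "\<And>x. \<mu> x \<le> \<nu> x"
proof -
  from assms obtain \<mu> \<mu>' where "is_subdist \<mu>" "is_subdist \<mu>'" "\<nu> = (\<lambda>x. \<mu> x + \<mu>' x)"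
      "mass \<mu> = p" "\<forall>x\<in>supp \<mu>. A x"
    by (auto simp: prob_ge_def)
  then show thesis
    by (intro that[of \<mu>]) (auto simp: is_subdist_def)
qed

lemma prob_ge_compl_add_le_mass:
  assumes \<nu>: "is_subdist \<nu>"
    and A: "models \<nu> (prob_ge A p)" and not_A: "models \<nu> (prob_ge (\<lambda>s. \<not> A s) q)"
  shows "p + q \<le> mass \<nu>"
proof -
  obtain \<mu>\<^sub>A where \<mu>\<^sub>A: "is_subdist \<mu>\<^sub>A" "mass \<mu>\<^sub>A = p" "\<forall>x\<in>supp \<mu>\<^sub>A. A x" "\<And>x. \<mu>\<^sub>A x \<le> \<nu> x"
    using models_prob_geE[OF A] by blast
  obtain \<mu>\<^sub>B where \<mu>\<^sub>B: "is_subdist \<mu>\<^sub>B" "mass \<mu>\<^sub>B = q" "\<forall>x\<in>supp \<mu>\<^sub>B. \<not> A x" "\<And>x. \<mu>\<^sub>B x \<le> \<nu> x"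
    using models_prob_geE[OF not_A] by blast
  have summable: "\<mu>\<^sub>A summable_on UNIV" "\<mu>\<^sub>B summable_on UNIV" "\<nu> summable_on UNIV"
    using \<mu>\<^sub>A(1) \<mu>\<^sub>B(1) \<nu> by (auto simp: is_subdist_def)
  have disjoint: "\<mu>\<^sub>A x + \<mu>\<^sub>B x \<le> \<nu> x" for x
  proof (cases "A x")
    case True
    then have "\<mu>\<^sub>B x = 0"
      using \<mu>\<^sub>B(3) by (auto simp: supp_def)
    then show ?thesis
      using \<mu>\<^sub>A(4)[of x] by simp
  next
    case False
    then have "\<mu>\<^sub>A x = 0"
      using \<mu>\<^sub>A(3) by (auto simp: supp_def)
    then show ?thesis
      using \<mu>\<^sub>B(4)[of x] by simp
  qed
  have "p + q = infsum (\<lambda>x. \<mu>\<^sub>A x + \<mu>\<^sub>B x) UNIV"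
    using infsum_add[OF summable(1,2)] \<mu>\<^sub>A(2) \<mu>\<^sub>B(2) by (simp add: mass_def)
  also have "\<dots> \<le> mass \<nu>"
    unfolding mass_def using summable disjoint by (intro infsum_mono summable_on_add) auto
  finally show ?thesis .
qed

theorem theorem5p11:
  fixes C :: "'s \<Rightarrow> 's \<Rightarrow> real" and \<phi> :: "'s oassn" and A :: "'s \<Rightarrow> bool" and p q :: real
  assumes "is_kernel C"
    and "0 \<le> p" "p \<le> 1" "0 \<le> q" "q \<le> 1" "q > 1 - p"
    and "\<exists>\<phi>'. oimplies \<phi>' \<phi> \<and> osat \<phi>' \<and> valid_triple \<phi>' C (prob_ge (\<lambda>s. \<not> A s) q)"
  shows "\<not> valid_triple \<phi> C (prob_ge A p)"
proof
  assume valid: "valid_triple \<phi> C (prob_ge A p)"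
  obtain \<phi>' where "oimplies \<phi>' \<phi>" "osat \<phi>'"
    and valid': "valid_triple \<phi>' C (prob_ge (\<lambda>s. \<not> A s) q)"
    using assms(7) by blast
  then obtain \<mu> where \<mu>: "is_subdist \<mu>" "models \<mu> \<phi>'" "models \<mu> \<phi>"
    by (auto simp: osat_def oimplies_def)
  have \<nu>: "is_subdist (lift_sem C \<mu>)"
    using assms(1) \<mu>(1) by (rule is_subdist_lift_sem)
  have "p + q \<le> mass (lift_sem C \<mu>)"
    using \<nu> valid valid' \<mu> by (intro prob_ge_compl_add_le_mass) (auto simp: valid_triple_def)
  also have "\<dots> \<le> 1"
    using \<nu> by (simp add: is_subdist_def mass_def)
  finally show False
    using assms(6) by simp
qed

end
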